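(* Let $\Omega\subset\mathbb{C}$ be a bounded domain and $\varphi$ a smooth real-valued function on $\Omega$. Suppose that for every point $a\in\Omega$ there exist $\gamma_a\in(0,\delta(a))$ and a lower semi-continuous function $g_a\colon[0,\gamma_a]\to\mathbb{R}_{\geq0}$ such that $L_\varphi(a,r)\leq e^{-g_a(r)r^2}$ for all $r\in(0,\gamma_a)$. Then for every $a\in\Omega$, $$\sqrt{-1}\partial\overline{\partial}\varphi(a)\geq 2g_a(0)\,\omega,\qquad\text{i.e.}\qquad \frac{\partial^2\varphi}{\partial z\partial\bar z}(a)\geq 2g_a(0),$$ where $\omega=\sqrt{-1}\,\mathrm{d}z\wedge\mathrm{d}\bar z$.
   Context: For $a\in\mathbb{C}$ and $r>0$, $\Delta(a;r)=\{z\in\mathbb{C}\mid |z-a|<r\}$. For a domain $\Omega\subset\mathbb{C}$ and $a\in\Omega$, $\delta(a):=\sup\{r>0\mid \Delta(a;r)\subset\Omega\}$, and $\Omega_\delta:=\{(a,r)\in\Omega\times\mathbb{R}\mid 0<r<\delta(a)\}$. For a domain $D$ and a smooth real function $\varphi$, $A^2(D,\varphi)$ denotes the space of holomorphic functions $f$ on $D$ with $\int_D|f|^2e^{-\varphi}<\infty$ (integrals with respect to Lebesgue measure). The $L^2$-extension index of $\varphi$ is the function on $\Omega_\delta$ $$L_\varphi(a,r)=\frac{1}{\pi r^2K_{\Delta(a;r),\varphi}(a)}=\inf\left\{\frac{\int_{\Delta(a;r)}|f|^2e^{-\varphi}}{\pi r^2e^{-\varphi(a)}}\ \middle|\ f\in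 A^2(\Delta(a;r),\varphi),\ f(a)=1\right\},$$ where $K_{\Delta(a;r),\varphi}$ is the weighted Bergman kernel of $\Delta(a;r)$ with weight $e^{-\varphi}$. *)

theory Defs
  imports "HOL-Analysis.Analysis"
begin

definition pdx :: "(complex \<Rightarrow> real) \<Rightarrow> complex \<Rightarrow> real" where
  "pdx f z = deriv (\<lambda>t::real. f (z + of_real t)) 0"

definition pdy :: "(complex \<Rightarrow> real) \<Rightarrow> complex \<Rightarrow> real" where
  "pdy f z = deriv (\<lambda>t::real. f (z + \<i> * of_real t)) 0"

fun iter_pd :: "bool list \<Rightarrow> (complex \<Rightarrow> real) \<Rightarrow> complex \<Rightarrow> real" where
  "iter_pd [] f = f"
| "iter_pd (b # bs) f = (if b then pdx else pdy) (iter_pd bs f)"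

definition smooth_on :: "complex set \<Rightarrow> (complex \<Rightarrow> real) \<Rightarrow> bool" where
  "smooth_on \<Omega> f \<longleftrightarrow>
     (\<forall>w. continuous_on \<Omega> (iter_pd w f) \<and>
          (\<forall>z\<in>\<Omega>. (\<lambda>t::real. iter_pd w f (z + of_real t)) differentiable (at 0) \<and>
                  (\<lambda>t::real. iter_pd w f (z + \<i> * of_real t)) differentiable (at 0)))"

definition dzdzbar :: "(complex \<Rightarrow> real) \<Rightarrow> complex \<Rightarrow> real" where
  "dzdzbar f a = (pdx (pdx f) a + pdy (pdy f) a) / 4"

definition delta :: "complex set \<Rightarrow> complex \<Rightarrow> real" where
  "delta \<Omega> a = Sup {r. r > 0 \<and> ball a r \<subseteq> \<Omega>}"

definition lower_semicontinuous_on :: "real set \<Rightarrow> (real \<Rightarrow> real) \<Rightarrow> bool" where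
  "lower_semicontinuous_on S g \<longleftrightarrow>
     (\<forall>x\<in>S. \<forall>c. c < g x \<longrightarrow> (\<forall>\<^sub>F y in at x within S. c < g y))"

definition L2_ext_index :: "(complex \<Rightarrow> real) \<Rightarrow> complex \<Rightarrow> real \<Rightarrow> real" where
  "L2_ext_index \<phi> a r = Inf
     {(LINT z:ball a r|lborel. (cmod (f z))\<^sup>2 * exp (- \<phi> z)) / (pi * r\<^sup>2 * exp (- \<phi> a)) | f.
        f holomorphic_on ball a r \<and> f a = 1 \<and>
        set_integrable lborel (ball a r) (\<lambda>z. (cmod (f z))\<^sup>2 * exp (- \<phi> z))}"

end

(*
  Fix a, let c be the value of d^2 phi / (dz dzbar) at a and let eps > 0. Taylor's formula gives
  phi(a + u) <= phi(a) + Re h(u) + (c + eps) |u|^2 near a, where h(u) = beta u + alpha u^2 is a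
  holomorphic polynomial: the quadratic Taylor polynomial minus its Laplacian part c |u|^2 is
  pluriharmonic. For f holomorphic on Delta(a; r) with f(a) = 1, the function
  F(u) = f(a + u) exp(- h(u) / 2) is holomorphic with F(0) = 1, and
  |f(a + u)|^2 exp(- phi(a + u)) >= exp(- phi(a)) |F(u)|^2 exp(- (c + eps) |u|^2).
  Against a radial weight W every monomial u^n with n >= 1 integrates to zero, since rotating by
  exp(i pi / (n + 1)) preserves Lebesgue measure and multiplies u^n by a constant other than 1.
  Hence the W-mean of F is F(0) = 1, and |F|^2 >= 2 Re F - 1 gives int |F|^2 W >= int W.
  With W(u) = exp(- (c + eps) |u|^2) >= 1 - (c + eps) |u|^2 and int_{|u| < r} |u|^2 = pi r^4 / 2
  this yields L_phi(a, r) >= 1 - (c + eps) r^2 / 2. On the other hand, if m' < g_a(0) and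
  m = max m' 0, then g_a(r) >= m for small r by lower semicontinuity and nonnegativity, so
  L_phi(a, r) <= exp(- m r^2) <= 1 - m r^2 + m^2 r^4. Comparing the coefficients of r^2 gives
  2 m <= c + eps.
*)

theory Submission
  imports Defs "HOL-Complex_Analysis.Complex_Analysis"
begin

section \<open>Rotation invariance of Lebesgue measure on \<open>\<complex>\<close>\<close>

lemma lborel_complex_eq_distr_pair:
  "(lborel :: complex measure) = distr (lborel \<Otimes>\<^sub>M lborel) borel (\<lambda>(x, y). Complex x y)"
proof (rule lborel_eqI)
  fix l u :: complex
  assume le: "\<And>b. b \<in> Basis \<Longrightarrow> l \<bullet> b \<le> u \<bullet> b"
  have "Re l \<le> Re u" "Im l \<le> Im u"
    using le[of 1] le[of \<i>] by (auto simp: Basis_complex_def inner_complex_def)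
  moreover have "(\<lambda>(x, y). Complex x y) \<in> (lborel \<Otimes>\<^sub>M lborel) \<rightarrow>\<^sub>M borel"
    unfolding Complex_eq by measurable
  moreover have "(\<lambda>(x, y). Complex x y) -` box l u \<inter> space (lborel \<Otimes>\<^sub>M lborel)
      = {Re l<..<Re u} \<times> {Im l<..<Im u}"
    by (auto simp: box_def Basis_complex_def inner_complex_def space_pair_measure)
  ultimately show "emeasure (distr (lborel \<Otimes>\<^sub>M lborel) borel (\<lambda>(x, y). Complex x y)) (box l u)
      = (\<Prod>b\<in>Basis. (u - l) \<bullet> b)"
    by (simp add: emeasure_distr lborel.emeasure_pair_measure_Times Basis_complex_def
        inner_complex_def ennreal_mult)
qed simp

lemma nn_integral_lborel_complex:
  fixes f :: "complex \<Rightarrow> ennreal"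
  assumes [measurable]: "f \<in> borel_measurable borel"
  shows "(\<integral>\<^sup>+z. f z \<partial>lborel) = (\<integral>\<^sup>+x. (\<integral>\<^sup>+y. f (Complex x y) \<partial>lborel) \<partial>lborel)"
    and "(\<integral>\<^sup>+z. f z \<partial>lborel) = (\<integral>\<^sup>+y. (\<integral>\<^sup>+x. f (Complex x y) \<partial>lborel) \<partial>lborel)"
proof -
  have [measurable]: "(\<lambda>(x, y). Complex x y) \<in> (lborel \<Otimes>\<^sub>M lborel) \<rightarrow>\<^sub>M borel"
    unfolding Complex_eq by measurable
  have m: "(\<lambda>(x, y). f (Complex x y)) \<in> borel_measurable (lborel \<Otimes>\<^sub>M lborel)"
    by measurable
  have "(\<integral>\<^sup>+z. f z \<partial>lborel) = (\<integral>\<^sup>+p. f (case p of (x, y) \<Rightarrow> Complex x y) \<partial>(lborel \<Otimes>\<^sub>M lborel))"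
    by (subst lborel_complex_eq_distr_pair) (simp add: nn_integral_distr)
  also have "\<dots> = (\<integral>\<^sup>+x. (\<integral>\<^sup>+y. f (Complex x y) \<partial>lborel) \<partial>lborel)"
    using lborel.nn_integral_fst[OF m] by (simp add: case_prod_beta')
  finally show "(\<integral>\<^sup>+z. f z \<partial>lborel) = (\<integral>\<^sup>+x. (\<integral>\<^sup>+y. f (Complex x y) \<partial>lborel) \<partial>lborel)" .
  with lborel_pair.Fubini'[OF m]
  show "(\<integral>\<^sup>+z. f z \<partial>lborel) = (\<integral>\<^sup>+y. (\<integral>\<^sup>+x. f (Complex x y) \<partial>lborel) \<partial>lborel)"
    by simp
qed

definition shear_Re :: "real \<Rightarrow> complex \<Rightarrow> complex" where
  "shear_Re t z = Complex (Re z + t * Im z) (Im z)"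

definition shear_Im :: "real \<Rightarrow> complex \<Rightarrow> complex" where
  "shear_Im t z = Complex (Re z) (Im z + t * Re z)"

lemma nn_integral_shear_Re:
  fixes f :: "complex \<Rightarrow> ennreal"
  assumes [measurable]: "f \<in> borel_measurable borel"
  shows "(\<integral>\<^sup>+z. f (shear_Re t z) \<partial>lborel) = (\<integral>\<^sup>+z. f z \<partial>lborel)"
proof -
  have "(\<lambda>z. f (shear_Re t z)) \<in> borel_measurable borel"
    unfolding shear_Re_def Complex_eq by measurable
  from nn_integral_lborel_complex(2)[OF this]
  have "(\<integral>\<^sup>+z. f (shear_Re t z) \<partial>lborel)
      = (\<integral>\<^sup>+y. (\<integral>\<^sup>+x. f (Complex (x + t * y) y) \<partial>lborel) \<partial>lborel)"
    by (simp add: shear_Re_def)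
  also have "\<dots> = (\<integral>\<^sup>+y. (\<integral>\<^sup>+x. f (Complex x y) \<partial>lborel) \<partial>lborel)"
  proof (rule nn_integral_cong)
    fix y :: real
    have "(\<lambda>x. f (Complex x y)) \<in> borel_measurable borel"
      unfolding Complex_eq by measurable
    from nn_integral_real_affine[OF this, of 1 "t * y"]
    show "(\<integral>\<^sup>+x. f (Complex (x + t * y) y) \<partial>lborel) = (\<integral>\<^sup>+x. f (Complex x y) \<partial>lborel)"
      by (simp add: add.commute)
  qed
  also have "\<dots> = (\<integral>\<^sup>+z. f z \<partial>lborel)"
    by (simp add: nn_integral_lborel_complex(2)[OF assms])
  finally show ?thesis .
qed

lemma nn_integral_shear_Im:
  fixes f :: "complex \<Rightarrow> ennreal"
  assumes [measurable]: "f \<in> borel_measurable borel"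
  shows "(\<integral>\<^sup>+z. f (shear_Im t z) \<partial>lborel) = (\<integral>\<^sup>+z. f z \<partial>lborel)"
proof -
  have "(\<lambda>z. f (shear_Im t z)) \<in> borel_measurable borel"
    unfolding shear_Im_def Complex_eq by measurable
  from nn_integral_lborel_complex(1)[OF this]
  have "(\<integral>\<^sup>+z. f (shear_Im t z) \<partial>lborel)
      = (\<integral>\<^sup>+x. (\<integral>\<^sup>+y. f (Complex x (y + t * x)) \<partial>lborel) \<partial>lborel)"
    by (simp add: shear_Im_def)
  also have "\<dots> = (\<integral>\<^sup>+x. (\<integral>\<^sup>+y. f (Complex x y) \<partial>lborel) \<partial>lborel)"
  proof (rule nn_integral_cong)
    fix x :: real
    have "(\<lambda>y. f (Complex x y)) \<in> borel_measurable borel"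
      unfolding Complex_eq by measurable
    from nn_integral_real_affine[OF this, of 1 "t * x"]
    show "(\<integral>\<^sup>+y. f (Complex x (y + t * x)) \<partial>lborel) = (\<integral>\<^sup>+y. f (Complex x y) \<partial>lborel)"
      by (simp add: add.commute)
  qed
  also have "\<dots> = (\<integral>\<^sup>+z. f z \<partial>lborel)"
    by (simp add: nn_integral_lborel_complex(1)[OF assms])
  finally show ?thesis .
qed

lemma borel_measurable_shear_Re [measurable]: "shear_Re t \<in> borel_measurable borel"
  unfolding shear_Re_def Complex_eq by measurable

lemma borel_measurable_shear_Im [measurable]: "shear_Im t \<in> borel_measurable borel"
  unfolding shear_Im_def Complex_eq by measurable

text \<open>A rotation is the product of three shears (Paeth's decomposition).\<close>
lemma mult_unit_eq_shears:
  assumes "norm u = 1" "Im u \<noteq> 0"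
  defines "s \<equiv> - (1 - Re u) / Im u"
  shows "u * z = shear_Re s (shear_Im (Im u) (shear_Re s z))"
proof -
  have "(Re u)\<^sup>2 + (Im u)\<^sup>2 = 1"
    using assms(1) by (metis cmod_power2 power_one)
  with assms(2) show ?thesis
    unfolding s_def shear_Re_def shear_Im_def complex_eq_iff
    by (simp add: field_simps power2_eq_square) algebra
qed

lemma lborel_distr_mult_unit:
  assumes "norm u = 1" "Im u \<noteq> 0"
  shows "distr lborel borel (\<lambda>z. u * z) = (lborel :: complex measure)"
proof (rule measure_eqI)
  fix A :: "complex set"
  assume "A \<in> sets (distr lborel borel ((*) u))"
  then have A [measurable]: "A \<in> sets borel" by simp
  define s where "s = - (1 - Re u) / Im u"
  have "emeasure (distr lborel borel ((*) u)) A = (\<integral>\<^sup>+z. indicator ((*) u -` A) z \<partial>lborel)"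
    by (simp add: emeasure_distr measurable_sets_borel[OF _ A])
  also have "\<dots> = (\<integral>\<^sup>+z. indicator A (shear_Re s (shear_Im (Im u) (shear_Re s z))) \<partial>lborel)"
    using mult_unit_eq_shears[OF assms] by (simp add: s_def indicator_vimage)
  also have "\<dots> = (\<integral>\<^sup>+z. indicator A (shear_Re s (shear_Im (Im u) z)) \<partial>lborel)"
    by (rule nn_integral_shear_Re[of "\<lambda>w. indicator A (shear_Re s (shear_Im (Im u) w))"]) simp
  also have "\<dots> = (\<integral>\<^sup>+z. indicator A (shear_Re s z) \<partial>lborel)"
    by (rule nn_integral_shear_Im[of "\<lambda>w. indicator A (shear_Re s w)"]) simp
  also have "\<dots> = emeasure lborel A"
    by (subst nn_integral_shear_Re) simp_all
  finally show "emeasure (distr lborel borel ((*) u)) A = emeasure lborel A" .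
qed simp

section \<open>The mean value property against radial weights\<close>

lemma integral_radial_times_power_eq_0:
  fixes W :: "real \<Rightarrow> real"
  assumes "n \<ge> 1" and "W \<in> borel_measurable borel"
  shows "(LINT z|lborel. indicator (ball 0 \<rho>) z *\<^sub>R (complex_of_real (W (norm z)) * z ^ n)) = 0"
proof -
  define u where "u = cis (pi / (n + 1))"
  define h where "h z = indicator (ball 0 \<rho>) z *\<^sub>R (complex_of_real (W (norm z)) * z ^ n)" for z
  have u: "norm u = 1" "0 < Im (u ^ n)" "Im u \<noteq> 0"
  proof -
    have "0 < pi / (n + 1)" "pi / (n + 1) < pi" "0 < n * (pi / (n + 1))" "n * (pi / (n + 1)) < pi"
      using \<open>n \<ge> 1\<close> by (auto simp: field_simps)
    then have "0 < sin (pi / (n + 1))" "0 < sin (n * (pi / (n + 1)))"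
      by (simp_all add: sin_gt_zero)
    moreover have "Im (u ^ n) = sin (n * (pi / (n + 1)))"
      by (simp only: u_def sin_n_Im_cis_pow_n)
    ultimately show "norm u = 1" "0 < Im (u ^ n)" "Im u \<noteq> 0"
      by (simp_all add: u_def)
  qed
  have [measurable]: "ball 0 \<rho> \<in> sets borel" "(\<lambda>z::complex. W (norm z)) \<in> borel_measurable borel"
    by simp (metis borel_measurable_norm comp_def measurable_compose \<open>W \<in> borel_measurable borel\<close>)
  have [measurable]: "h \<in> borel_measurable borel"
    unfolding h_def by measurable
  have "integral\<^sup>L lborel h = integral\<^sup>L (distr lborel borel ((*) u)) h"
    by (simp add: lborel_distr_mult_unit u)
  also have "\<dots> = (LINT z|lborel. h (u * z))"
    by (simp add: integral_distr)
  also have "\<dots> = (LINT z|lborel. u ^ n * h z)"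
  proof (rule Bochner_Integration.integral_cong)
    fix z
    show "h (u * z) = u ^ n * h z"
      using u(1) by (simp add: h_def norm_mult power_mult_distrib indicator_def)
  qed simp
  finally have "(1 - u ^ n) * integral\<^sup>L lborel h = 0"
    by (simp add: algebra_simps)
  moreover have "u ^ n \<noteq> 1"
    using u(2) by auto
  ultimately show ?thesis
    by (simp add: h_def[abs_def])
qed

lemma integrable_indicator_ball_continuous:
  fixes g :: "'a::euclidean_space \<Rightarrow> 'b::{banach, second_countable_topology}"
  assumes "continuous_on (cball c \<rho>) g"
  shows "integrable lborel (\<lambda>z. indicator (ball c \<rho>) z *\<^sub>R g z)"
proof (rule Bochner_Integration.integrable_bound)
  show "integrable lborel (\<lambda>z. indicator (cball c \<rho>) z *\<^sub>R g z)"
    by (rule borel_integrable_compact) (auto intro: assms)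
  show "(\<lambda>z. indicator (ball c \<rho>) z *\<^sub>R g z) \<in> borel_measurable lborel"
    using borel_measurable_continuous_on_indicator[of "ball c \<rho>" g]
      continuous_on_subset[OF assms ball_subset_cball]
    by simp
  show "AE z in lborel. norm (indicator (ball c \<rho>) z *\<^sub>R g z) \<le> norm (indicator (cball c \<rho>) z *\<^sub>R g z)"
    by (auto simp: indicator_def)
qed

lemma power_series_partial_sums_bounded:
  fixes a :: "nat \<Rightarrow> 'a::{real_normed_div_algebra, banach}"
  assumes "summable (\<lambda>n. a n * of_real R ^ n)" "0 \<le> \<rho>" "\<rho> < R"
  obtains B where "\<And>N z. norm z \<le> \<rho> \<Longrightarrow> norm (\<Sum>n<N. a n * z ^ n) \<le> B"
proof
  have "Bseq (\<lambda>n. a n * of_real R ^ n)"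
    using summable_LIMSEQ_zero[OF assms(1)] by (rule convergent_imp_Bseq[OF convergentI])
  then obtain M where "\<And>n. norm (a n * of_real R ^ n) \<le> M"
    by (auto simp: Bseq_def)
  then have summable: "summable (\<lambda>n. norm (a n) * \<rho> ^ n)"
    using assms(2,3) by (intro Abel_lemma[of \<rho> R]) (auto simp: norm_mult norm_power)
  fix N and z :: 'a
  assume "norm z \<le> \<rho>"
  then have "norm (\<Sum>n<N. a n * z ^ n) \<le> (\<Sum>n<N. norm (a n) * \<rho> ^ n)"
    by (intro sum_norm_le) (auto simp: norm_mult norm_power intro!: mult_left_mono power_mono)
  also have "\<dots> \<le> (\<Sum>n. norm (a n) * \<rho> ^ n)"
    using summable assms(2) by (intro sum_le_suminf) auto
  finally show "norm (\<Sum>n<N. a n * z ^ n) \<le> (\<Sum>n. norm (a n) * \<rho> ^ n)" .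
qed

lemma continuous_on_radial:
  fixes W :: "real \<Rightarrow> real"
  assumes "continuous_on UNIV W"
  shows "continuous_on S (\<lambda>z::'a::real_normed_vector. W (norm z))"
  by (rule continuous_on_compose2[OF assms]) (auto intro: continuous_intros)

lemma integral_radial_times_polynomial:
  fixes W :: "real \<Rightarrow> real" and a :: "nat \<Rightarrow> complex"
  assumes W: "continuous_on UNIV W"
  shows "(LINT z|lborel. indicator (ball 0 \<rho>) z *\<^sub>R (of_real (W (norm z)) * (\<Sum>n<Suc N. a n * z ^ n)))
       = a 0 * (LINT (z::complex)|lborel. indicator (ball 0 \<rho>) z *\<^sub>R of_real (W (norm z)))"
proof -
  have int: "integrable lborel (\<lambda>z. indicator (ball 0 \<rho>) z *\<^sub>R (complex_of_real (W (norm z)) * z ^ n))" for n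
    by (intro integrable_indicator_ball_continuous continuous_intros continuous_on_radial W)
  have vanish: "(LINT z|lborel. indicator (ball 0 \<rho>) z *\<^sub>R (complex_of_real (W (norm z)) * z ^ Suc n)) = 0" for n
    using integral_radial_times_power_eq_0[of "Suc n" W] W
    by (simp add: borel_measurable_continuous_onI del: power_Suc)
  have "(LINT z|lborel. indicator (ball 0 \<rho>) z *\<^sub>R (of_real (W (norm z)) * (\<Sum>n<Suc N. a n * z ^ n)))
      = (LINT z|lborel. (\<Sum>n<Suc N. a n * (indicator (ball 0 \<rho>) z *\<^sub>R (of_real (W (norm z)) * z ^ n))))"
    by (intro Bochner_Integration.integral_cong refl)
      (simp add: scaleR_conv_of_real sum_distrib_left mult_ac del: sum.lessThan_Suc)
  also have "\<dots> = (\<Sum>n<Suc N. (LINT z|lborel. a n * (indicator (ball 0 \<rho>) z *\<^sub>R (of_real (W (norm z)) * z ^ n))))"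
    by (rule Bochner_Integration.integral_sum) (intro integrable_mult_right int)
  also have "\<dots> = (\<Sum>n<Suc N. a n * (LINT z|lborel. indicator (ball 0 \<rho>) z *\<^sub>R (of_real (W (norm z)) * z ^ n)))"
    by (simp only: integral_mult_right_zero)
  also have "\<dots> = a 0 * (LINT (z::complex)|lborel. indicator (ball 0 \<rho>) z *\<^sub>R of_real (W (norm z)))"
    by (subst sum.lessThan_Suc_shift) (simp add: vanish del: power_Suc)
  finally show ?thesis .
qed

lemma tendsto_integral_indicator_ball:
  fixes s :: "nat \<Rightarrow> 'a::euclidean_space \<Rightarrow> 'b::{banach, second_countable_topology}"
  assumes cont: "\<And>N. continuous_on (cball c \<rho>) (s N)" "continuous_on (cball c \<rho>) f"
    and lim: "\<And>z. z \<in> ball c \<rho> \<Longrightarrow> (\<lambda>N. s N z) \<longlonglongrightarrow> f z"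
    and bound: "\<And>N z. z \<in> ball c \<rho> \<Longrightarrow> norm (s N z) \<le> B"
  shows "(\<lambda>N. LINT z|lborel. indicator (ball c \<rho>) z *\<^sub>R s N z)
           \<longlonglongrightarrow> (LINT z|lborel. indicator (ball c \<rho>) z *\<^sub>R f z)"
proof (rule integral_dominated_convergence[where w = "\<lambda>z. indicator (ball c \<rho>) z * B"])
  show "(\<lambda>z. indicator (ball c \<rho>) z *\<^sub>R f z) \<in> borel_measurable lborel"
    using integrable_indicator_ball_continuous[OF cont(2)] by auto
  show "(\<lambda>z. indicator (ball c \<rho>) z *\<^sub>R s N z) \<in> borel_measurable lborel" for N
    using integrable_indicator_ball_continuous[OF cont(1)] by auto
  show "integrable lborel (\<lambda>z. indicator (ball c \<rho>) z * B)"
    by (intro integrable_mult_left integrable_real_indicator emeasure_bounded_finite) auto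
  show "AE z in lborel. (\<lambda>N. indicator (ball c \<rho>) z *\<^sub>R s N z)
      \<longlonglongrightarrow> indicator (ball c \<rho>) z *\<^sub>R f z"
    using lim by (intro AE_I2) (simp add: indicator_def)
  show "AE z in lborel. norm (indicator (ball c \<rho>) z *\<^sub>R s N z) \<le> indicator (ball c \<rho>) z * B" for N
    using bound by (intro AE_I2) (simp add: indicator_def)
qed

lemma integral_radial_times_holomorphic:
  fixes F :: "complex \<Rightarrow> complex" and W :: "real \<Rightarrow> real"
  assumes holF: "F holomorphic_on ball 0 r" and \<rho>: "0 < \<rho>" "\<rho> < r"
    and W: "continuous_on UNIV W"
  shows "(LINT z|lborel. indicator (ball 0 \<rho>) z *\<^sub>R (of_real (W (norm z)) * F z))
       = F 0 * (LINT (z::complex)|lborel. indicator (ball 0 \<rho>) z *\<^sub>R of_real (W (norm z)))"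
proof -
  define a where "a n = (deriv ^^ n) F 0 / fact n" for n
  have sums: "(\<lambda>n. a n * w ^ n) sums F w" if "w \<in> ball 0 r" for w
    using holomorphic_power_series[OF holF that] by (simp add: a_def)
  have "\<bar>(\<rho> + r) / 2\<bar> < r"
    using \<rho> by (subst abs_of_pos) auto
  then have "summable (\<lambda>n. a n * of_real ((\<rho> + r) / 2) ^ n)"
    by (intro sums_summable[OF sums]) (simp only: mem_ball_0 norm_of_real)
  then obtain B where B: "\<And>N z. norm z \<le> \<rho> \<Longrightarrow> norm (\<Sum>n<N. a n * z ^ n) \<le> B"
    by (rule power_series_partial_sums_bounded[of a _ \<rho>]) (use \<rho> in auto)
  have "bounded (W ` {0..\<rho>})"
    by (intro compact_imp_bounded compact_continuous_image continuous_on_subset[OF W]) auto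
  then obtain M where M: "\<forall>t\<in>{0..\<rho>}. \<bar>W t\<bar> \<le> M"
    by (auto simp: bounded_iff)
  then have "0 \<le> M"
    using \<rho> abs_ge_zero[of "W 0"] by fastforce
  have "(\<lambda>N. LINT z|lborel. indicator (ball 0 \<rho>) z *\<^sub>R (of_real (W (norm z)) * (\<Sum>n<N. a n * z ^ n)))
      \<longlonglongrightarrow> (LINT z|lborel. indicator (ball 0 \<rho>) z *\<^sub>R (of_real (W (norm z)) * F z))"
  proof (rule tendsto_integral_indicator_ball)
    have "continuous_on (cball 0 \<rho>) F"
      by (rule continuous_on_subset[OF holomorphic_on_imp_continuous_on[OF holF]]) (use \<rho> in auto)
    then show "continuous_on (cball 0 \<rho>) (\<lambda>z. of_real (W (norm z)) * F z)"
      by (intro continuous_intros continuous_on_radial W)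
    show "(\<lambda>N. of_real (W (norm z)) * (\<Sum>n<N. a n * z ^ n)) \<longlonglongrightarrow> of_real (W (norm z)) * F z"
      if "z \<in> ball 0 \<rho>" for z
      using sums[of z] that \<rho> by (intro tendsto_intros) (simp add: sums_def)
    show "norm (of_real (W (norm z)) * (\<Sum>n<N. a n * z ^ n)) \<le> M * B" if "z \<in> ball 0 \<rho>" for N z
      using M B[of z N] that \<open>0 \<le> M\<close> unfolding norm_mult by (intro mult_mono) auto
  qed (intro continuous_intros continuous_on_radial W)
  then have "(\<lambda>N. LINT z|lborel. indicator (ball 0 \<rho>) z *\<^sub>R (of_real (W (norm z)) * (\<Sum>n<Suc N. a n * z ^ n)))
      \<longlonglongrightarrow> (LINT z|lborel. indicator (ball 0 \<rho>) z *\<^sub>R (of_real (W (norm z)) * F z))"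
    by (rule LIMSEQ_Suc)
  then show ?thesis
    unfolding integral_radial_times_polynomial[OF W] by (simp add: LIMSEQ_const_iff a_def)
qed

lemma integral_radial_times_Re_holomorphic:
  fixes F :: "complex \<Rightarrow> complex" and W :: "real \<Rightarrow> real"
  assumes holF: "F holomorphic_on ball 0 r" and \<rho>: "0 < \<rho>" "\<rho> < r"
    and W: "continuous_on UNIV W"
  shows "(LINT z|lborel. indicator (ball 0 \<rho>) z * (W (norm z) * Re (F z)))
       = Re (F 0) * (LINT (z::complex)|lborel. indicator (ball 0 \<rho>) z * W (norm z))"
proof -
  have "continuous_on (cball 0 \<rho>) F"
    by (rule continuous_on_subset[OF holomorphic_on_imp_continuous_on[OF holF]]) (use \<rho> in auto)
  then have "integrable lborel (\<lambda>z. indicator (ball 0 \<rho>) z *\<^sub>R (of_real (W (norm z)) * F z))"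
    by (intro integrable_indicator_ball_continuous continuous_intros continuous_on_radial W)
  then have "(LINT z|lborel. indicator (ball 0 \<rho>) z * (W (norm z) * Re (F z)))
      = Re (LINT z|lborel. indicator (ball 0 \<rho>) z *\<^sub>R (of_real (W (norm z)) * F z))"
    by (simp add: integral_Re[symmetric])
  also have "\<dots> = Re (F 0 * of_real (LINT (z::complex)|lborel. indicator (ball 0 \<rho>) z * W (norm z)))"
  proof -
    have "(\<lambda>z::complex. indicator (ball 0 \<rho>) z *\<^sub>R complex_of_real (W (norm z)))
        = (\<lambda>z. complex_of_real (indicator (ball 0 \<rho>) z * W (norm z)))"
      by (auto simp: fun_eq_iff indicator_def)
    then show ?thesis
      by (simp only: integral_radial_times_holomorphic[OF holF \<rho> W] integral_complex_of_real)
  qed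
  finally show ?thesis
    by simp
qed

lemma two_Re_minus_one_le_sq_norm: "2 * Re w - 1 \<le> (cmod w)\<^sup>2"
  using cmod_power2[of w] sum_power2_ge_zero[of "Re w - 1" "Im w"] by (simp add: power2_diff)

lemma integral_sq_norm_radial_ge:
  fixes F :: "complex \<Rightarrow> complex" and W :: "real \<Rightarrow> real"
  assumes holF: "F holomorphic_on ball 0 r" and F0: "F 0 = 1" and \<rho>: "0 < \<rho>" "\<rho> < r"
    and W: "continuous_on UNIV W" and W_nonneg: "\<And>t. 0 \<le> W t"
  shows "(LINT (z::complex)|lborel. indicator (ball 0 \<rho>) z * W (norm z))
       \<le> (LINT z|lborel. indicator (ball 0 \<rho>) z * ((cmod (F z))\<^sup>2 * W (norm z)))"
proof -
  have "continuous_on (cball 0 \<rho>) F"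
    by (rule continuous_on_subset[OF holomorphic_on_imp_continuous_on[OF holF]]) (use \<rho> in auto)
  note cont = this continuous_on_radial[OF W]
  have int: "integrable lborel (\<lambda>z. indicator (ball 0 \<rho>) z * ((cmod (F z))\<^sup>2 * W (norm z)))"
    "integrable lborel (\<lambda>z. indicator (ball 0 \<rho>) z * (W (norm z) * Re (F z)))"
    "integrable lborel (\<lambda>z::complex. indicator (ball 0 \<rho>) z * W (norm z))"
    using integrable_indicator_ball_continuous[of 0 \<rho> "\<lambda>z. (cmod (F z))\<^sup>2 * W (norm z)"]
      integrable_indicator_ball_continuous[of 0 \<rho> "\<lambda>z. W (norm z) * Re (F z)"]
      integrable_indicator_ball_continuous[of 0 \<rho> "\<lambda>z::complex. W (norm z)"]
    by (simp_all add: cont continuous_intros)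
  have "(LINT (z::complex)|lborel. indicator (ball 0 \<rho>) z * W (norm z))
      = (LINT z|lborel. 2 * (indicator (ball 0 \<rho>) z * (W (norm z) * Re (F z)))
          - indicator (ball 0 \<rho>) z * W (norm z))"
    using int integral_radial_times_Re_holomorphic[OF holF \<rho> W] F0 by simp
  also have "\<dots> \<le> (LINT z|lborel. indicator (ball 0 \<rho>) z * ((cmod (F z))\<^sup>2 * W (norm z)))"
  proof (rule integral_mono)
    show "2 * (indicator (ball 0 \<rho>) z * (W (norm z) * Re (F z))) - indicator (ball 0 \<rho>) z * W (norm z)
        \<le> indicator (ball 0 \<rho>) z * ((cmod (F z))\<^sup>2 * W (norm z))" for z
      using mult_left_mono[OF two_Re_minus_one_le_sq_norm[of "F z"] W_nonneg[of "norm z"]]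
      by (auto simp: indicator_def algebra_simps)
  qed (use int in auto)
  finally show ?thesis .
qed

section \<open>Integrals over discs\<close>

lemma lborel_integral_affine:
  fixes f :: "'a::euclidean_space \<Rightarrow> real" and c :: real
  assumes "c \<noteq> 0" and [measurable]: "f \<in> borel_measurable borel"
  shows "(LINT x|lborel. f x) = \<bar>c\<bar> ^ DIM('a) * (LINT x|lborel. f (t + c *\<^sub>R x))"
proof -
  have "(LINT x|lborel. f x)
      = integral\<^sup>L (density (distr lborel borel (\<lambda>x. t + c *\<^sub>R x)) (\<lambda>_. \<bar>c\<bar> ^ DIM('a))) f"
    using lborel_affine[OF assms(1), of t] by simp
  also have "\<dots> = integral\<^sup>L (distr lborel borel (\<lambda>x. t + c *\<^sub>R x)) (\<lambda>x. \<bar>c\<bar> ^ DIM('a) *\<^sub>R f x)"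
    by (rule integral_density) auto
  also have "\<dots> = (LINT x|lborel. \<bar>c\<bar> ^ DIM('a) * f (t + c *\<^sub>R x))"
    by (subst integral_distr) auto
  finally show ?thesis
    by simp
qed

lemma integrable_indicator_ball_norm_sq:
  "integrable lborel (\<lambda>z. indicator (ball (0::complex) s) z * (norm z)\<^sup>2)"
  using integrable_indicator_ball_continuous[of 0 s "\<lambda>z::complex. (norm z)\<^sup>2"]
  by (simp add: continuous_intros)

lemma integral_ball_norm_sq_scale:
  assumes "0 < s"
  shows "(LINT z|lborel. indicator (ball (0::complex) s) z * (norm z)\<^sup>2)
       = s ^ 4 * (LINT z|lborel. indicator (ball (0::complex) 1) z * (norm z)\<^sup>2)"
proof -
  have "(LINT z|lborel. indicator (ball (0::complex) s) z * (norm z)\<^sup>2)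
      = s\<^sup>2 * (LINT z|lborel. indicator (ball (0::complex) s) (s *\<^sub>R z) * (norm (s *\<^sub>R z))\<^sup>2)"
    using lborel_integral_affine[of s "\<lambda>z::complex. indicator (ball 0 s) z * (norm z)\<^sup>2" 0] assms
      borel_measurable_integrable[OF integrable_indicator_ball_norm_sq]
    by simp
  also have "(\<lambda>z::complex. indicator (ball 0 s) (s *\<^sub>R z) * (norm (s *\<^sub>R z))\<^sup>2)
      = (\<lambda>z. s\<^sup>2 * (indicator (ball 0 1) z * (norm z)\<^sup>2))"
    using assms by (auto simp: fun_eq_iff indicator_def power_mult_distrib)
  finally show ?thesis
    by (simp add: power_mult_distrib)
qed

lemma integral_annulus_norm_sq_bounds:
  assumes s: "0 < s" "s < 1"
  shows "s\<^sup>2 * (pi - pi * s\<^sup>2)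
         \<le> (LINT z|lborel. (indicator (ball 0 1) z - indicator (ball 0 s) z) * (norm (z::complex))\<^sup>2)"
    and "(LINT z|lborel. (indicator (ball 0 1) z - indicator (ball 0 s) z) * (norm (z::complex))\<^sup>2)
         \<le> pi - pi * s\<^sup>2"
proof -
  have int_ind: "integrable lborel (\<lambda>z. indicator (ball (0::complex) r) z :: real)" for r
    by (intro integrable_real_indicator emeasure_bounded_finite) auto
  have int_annulus: "integrable lborel (\<lambda>z. indicator (ball (0::complex) 1) z - indicator (ball 0 s) z :: real)"
    using int_ind by auto
  have int_annulus_sq: "integrable lborel
      (\<lambda>z. (indicator (ball (0::complex) 1) z - indicator (ball 0 s) z) * (norm z)\<^sup>2)"
    using integrable_indicator_ball_norm_sq[of 1] integrable_indicator_ball_norm_sq[of s]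
    by (auto simp: algebra_simps)
  have area: "(LINT z|lborel. indicator (ball (0::complex) 1) z - indicator (ball 0 s) z :: real)
      = pi - pi * s\<^sup>2"
    using s int_ind by (simp add: content_ball unit_ball_vol_2)
  have "s\<^sup>2 * (pi - pi * s\<^sup>2)
      = (LINT z|lborel. s\<^sup>2 * (indicator (ball (0::complex) 1) z - indicator (ball 0 s) z))"
    by (simp add: area)
  also have "\<dots> \<le> (LINT z|lborel. (indicator (ball 0 1) z - indicator (ball 0 s) z) * (norm (z::complex))\<^sup>2)"
    using s int_annulus int_annulus_sq
    by (intro integral_mono) (auto simp: indicator_def intro!: power_mono)
  finally show "s\<^sup>2 * (pi - pi * s\<^sup>2)
      \<le> (LINT z|lborel. (indicator (ball 0 1) z - indicator (ball 0 s) z) * (norm (z::complex))\<^sup>2)" .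
  have "(LINT z|lborel. (indicator (ball 0 1) z - indicator (ball 0 s) z) * (norm (z::complex))\<^sup>2)
      \<le> (LINT z|lborel. indicator (ball (0::complex) 1) z - indicator (ball 0 s) z :: real)"
    using s int_annulus int_annulus_sq
    by (intro integral_mono) (auto simp: indicator_def abs_square_le_1)
  then show "(LINT z|lborel. (indicator (ball 0 1) z - indicator (ball 0 s) z) * (norm (z::complex))\<^sup>2)
      \<le> pi - pi * s\<^sup>2"
    by (simp add: area)
qed

text \<open>With \<open>J s\<close> the integral below, scaling gives \<open>J s = s\<^sup>4 J 1\<close>, and comparing \<open>\<bar>z\<bar>\<^sup>2\<close> with
  its extreme values on the annulus \<open>\<surd>t \<le> \<bar>z\<bar> < 1\<close> gives \<open>t \<pi> \<le> (1 + t) J 1 \<le> \<pi>\<close>; let \<open>t \<rightarrow> 1\<close>.\<close>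
lemma integral_ball_norm_sq:
  assumes "0 \<le> s"
  shows "(LINT z|lborel. indicator (ball (0::complex) s) z * (norm z)\<^sup>2) = pi / 2 * s ^ 4"
proof -
  define J where "J r = (LINT z|lborel. indicator (ball (0::complex) r) z * (norm z)\<^sup>2)" for r
  have bounds: "t * pi \<le> J 1 * (1 + t)" "J 1 * (1 + t) \<le> pi" if "t \<in> {0<..<1}" for t
  proof -
    have t: "0 < t" "t < 1"
      using that by simp_all
    have annulus: "(LINT z|lborel. (indicator (ball 0 1) z - indicator (ball 0 (sqrt t)) z) * (norm (z::complex))\<^sup>2)
        = J 1 - t\<^sup>2 * J 1"
      using integral_ball_norm_sq_scale[of "sqrt t"] t
        integrable_indicator_ball_norm_sq[of 1] integrable_indicator_ball_norm_sq[of "sqrt t"]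
      by (simp add: J_def left_diff_distrib power4_eq_xxxx power2_eq_square)
    have "(1 - t) * (t * pi) \<le> (1 - t) * (J 1 * (1 + t))" "(1 - t) * (J 1 * (1 + t)) \<le> (1 - t) * pi"
      using integral_annulus_norm_sq_bounds[of "sqrt t"] t
      by (simp_all only: annulus real_sqrt_gt_zero real_sqrt_lt_1_iff real_sqrt_pow2 less_imp_le)
        (simp_all add: algebra_simps power2_eq_square)
    then show "t * pi \<le> J 1 * (1 + t)" "J 1 * (1 + t) \<le> pi"
      using t by simp_all
  qed
  have ev: "\<forall>\<^sub>F t in at_left 1. t \<in> {0<..<1::real}"
    by (rule eventually_at_left_real) simp
  have "pi \<le> J 1 * 2"
    by (rule tendsto_le[OF trivial_limit_at_left_real _ _ eventually_mono[OF ev bounds(1)]])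
      (auto intro!: tendsto_eq_intros)
  moreover have "J 1 * 2 \<le> pi"
    by (rule tendsto_le[OF trivial_limit_at_left_real _ _ eventually_mono[OF ev bounds(2)]])
      (auto intro!: tendsto_eq_intros)
  ultimately have "J 1 = pi / 2"
    by simp
  then show ?thesis
    using integral_ball_norm_sq_scale[of s] assms
    by (cases "s = 0") (simp_all add: J_def)
qed

lemma integral_ball_exp_neg_norm_sq_ge:
  assumes "0 \<le> s"
  shows "pi * s\<^sup>2 - k * pi * s ^ 4 / 2
       \<le> (LINT z|lborel. indicator (ball (0::complex) s) z * exp (- k * (norm z)\<^sup>2))"
proof -
  have int_ind: "integrable lborel (\<lambda>z. indicator (ball (0::complex) s) z :: real)"
    by (intro integrable_real_indicator emeasure_bounded_finite) auto
  have "pi * s\<^sup>2 - k * pi * s ^ 4 / 2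
      = (LINT z|lborel. indicator (ball (0::complex) s) z - k * (indicator (ball 0 s) z * (norm z)\<^sup>2))"
    using assms int_ind integrable_indicator_ball_norm_sq[of s]
    by (simp add: content_ball unit_ball_vol_2 integral_ball_norm_sq)
  also have "\<dots> \<le> (LINT z|lborel. indicator (ball (0::complex) s) z * exp (- k * (norm z)\<^sup>2))"
  proof (rule integral_mono)
    show "integrable lborel (\<lambda>z. indicator (ball (0::complex) s) z - k * (indicator (ball 0 s) z * (norm z)\<^sup>2))"
      using int_ind integrable_indicator_ball_norm_sq[of s] by auto
    show "integrable lborel (\<lambda>z. indicator (ball (0::complex) s) z * exp (- k * (norm z)\<^sup>2))"
      using integrable_indicator_ball_continuous[of 0 s "\<lambda>z::complex. exp (- k * (norm z)\<^sup>2)"]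
      by (simp add: continuous_intros)
    show "indicator (ball 0 s) z - k * (indicator (ball 0 s) z * (norm z)\<^sup>2)
        \<le> indicator (ball 0 s) z * exp (- k * (norm z)\<^sup>2)" for z :: complex
      using exp_ge_add_one_self[of "- k * (norm z)\<^sup>2"] by (auto simp: indicator_def)
  qed
  finally show ?thesis .
qed

section \<open>Second-order Taylor bound\<close>

lemma smooth_on_imp_continuous_on: "smooth_on \<Omega> \<phi> \<Longrightarrow> continuous_on \<Omega> \<phi>"
  unfolding smooth_on_def by (metis iter_pd.simps(1))

lemma smooth_on_has_real_derivative_Re:
  assumes "smooth_on \<Omega> \<phi>" "q + of_real t \<in> \<Omega>"
  shows "((\<lambda>t. iter_pd w \<phi> (q + of_real t)) has_real_derivative iter_pd (True # w) \<phi> (q + of_real t)) (at t)"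
proof -
  have "(\<lambda>s. iter_pd w \<phi> ((q + of_real t) + of_real s)) differentiable (at 0)"
    using assms unfolding smooth_on_def by blast
  then have "((\<lambda>s. iter_pd w \<phi> (q + of_real (s + t))) has_real_derivative iter_pd (True # w) \<phi> (q + of_real t)) (at 0)"
    by (simp add: DERIV_deriv_iff_real_differentiable[symmetric] pdx_def algebra_simps)
  then show ?thesis
    using DERIV_shift[of "\<lambda>t. iter_pd w \<phi> (q + of_real t)" _ 0 t] by simp
qed

lemma smooth_on_has_real_derivative_Im:
  assumes "smooth_on \<Omega> \<phi>" "q + \<i> * of_real t \<in> \<Omega>"
  shows "((\<lambda>t. iter_pd w \<phi> (q + \<i> * of_real t)) has_real_derivative iter_pd (False # w) \<phi> (q + \<i> * of_real t)) (at t)"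
proof -
  have "(\<lambda>s. iter_pd w \<phi> ((q + \<i> * of_real t) + \<i> * of_real s)) differentiable (at 0)"
    using assms unfolding smooth_on_def by blast
  then have "((\<lambda>s. iter_pd w \<phi> (q + \<i> * of_real (s + t))) has_real_derivative iter_pd (False # w) \<phi> (q + \<i> * of_real t)) (at 0)"
    by (simp add: DERIV_deriv_iff_real_differentiable[symmetric] pdy_def algebra_simps)
  then show ?thesis
    using DERIV_shift[of "\<lambda>t. iter_pd w \<phi> (q + \<i> * of_real t)" _ 0 t] by simp
qed

lemma smooth_on_Maclaurin_Re:
  assumes "smooth_on \<Omega> \<phi>" and "\<And>t. \<bar>t\<bar> \<le> \<bar>u\<bar> \<Longrightarrow> q + of_real t \<in> \<Omega>"
  obtains \<tau> where "\<bar>\<tau>\<bar> \<le> \<bar>u\<bar>"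
    "iter_pd w \<phi> (q + of_real u) = (\<Sum>m<n. iter_pd (replicate m True @ w) \<phi> q / fact m * u ^ m)
       + iter_pd (replicate n True @ w) \<phi> (q + of_real \<tau>) / fact n * u ^ n"
proof -
  have "\<exists>\<tau>. \<bar>\<tau>\<bar> \<le> \<bar>u\<bar> \<and> (\<lambda>t. iter_pd w \<phi> (q + of_real t)) u =
      (\<Sum>m<n. (\<lambda>m t. iter_pd (replicate m True @ w) \<phi> (q + of_real t)) m 0 / fact m * u ^ m)
      + (\<lambda>m t. iter_pd (replicate m True @ w) \<phi> (q + of_real t)) n \<tau> / fact n * u ^ n"
    by (rule Maclaurin_bi_le) (use smooth_on_has_real_derivative_Re[OF assms(1) assms(2)] in auto)
  with that show ?thesis
    by auto
qed

lemma smooth_on_Maclaurin_Im: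
  assumes "smooth_on \<Omega> \<phi>" and "\<And>t. \<bar>t\<bar> \<le> \<bar>v\<bar> \<Longrightarrow> q + \<i> * of_real t \<in> \<Omega>"
  obtains \<sigma> where "\<bar>\<sigma>\<bar> \<le> \<bar>v\<bar>"
    "iter_pd w \<phi> (q + \<i> * of_real v) = (\<Sum>m<n. iter_pd (replicate m False @ w) \<phi> q / fact m * v ^ m)
       + iter_pd (replicate n False @ w) \<phi> (q + \<i> * of_real \<sigma>) / fact n * v ^ n"
proof -
  have "\<exists>\<sigma>. \<bar>\<sigma>\<bar> \<le> \<bar>v\<bar> \<and> (\<lambda>t. iter_pd w \<phi> (q + \<i> * of_real t)) v =
      (\<Sum>m<n. (\<lambda>m t. iter_pd (replicate m False @ w) \<phi> (q + \<i> * of_real t)) m 0 / fact m * v ^ m)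
      + (\<lambda>m t. iter_pd (replicate m False @ w) \<phi> (q + \<i> * of_real t)) n \<sigma> / fact n * v ^ n"
    by (rule Maclaurin_bi_le) (use smooth_on_has_real_derivative_Im[OF assms(1) assms(2)] in auto)
  with that show ?thesis
    by auto
qed

lemma norm_Re_add_imag_le:
  fixes z :: complex
  assumes "\<bar>t\<bar> \<le> \<bar>Im z\<bar>"
  shows "norm (of_real (Re z) + \<i> * of_real t) \<le> norm z"
proof -
  have "(norm (of_real (Re z) + \<i> * of_real t))\<^sup>2 \<le> (norm z)\<^sup>2"
    using assms by (simp add: cmod_power2 abs_le_square_iff)
  then show ?thesis
    by (simp add: power2_le_iff_abs_le)
qed

lemma smooth_on_second_order_expansion:
  assumes sm: "smooth_on \<Omega> \<phi>" and \<delta>: "ball a \<delta> \<subseteq> \<Omega>" and z: "norm z < \<delta>"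
  obtains p1 p2 p3 where "dist p1 a \<le> norm z" "dist p2 a \<le> norm z" "dist p3 a \<le> norm z"
    "\<phi> (a + z) = \<phi> a + pdx \<phi> a * Re z + pdy \<phi> a * Im z + pdx (pdx \<phi>) p1 / 2 * (Re z)\<^sup>2
       + pdx (pdy \<phi>) p2 * Re z * Im z + pdy (pdy \<phi>) p3 / 2 * (Im z)\<^sup>2"
proof -
  define u where "u = Re z"
  define v where "v = Im z"
  have z_eq: "z = of_real u + \<i> * of_real v"
    by (simp add: u_def v_def complex_eq)
  have Re_close: "norm (of_real t :: complex) \<le> norm z" if "\<bar>t\<bar> \<le> \<bar>u\<bar>" for t
    using that abs_Re_le_cmod[of z] by (simp add: u_def v_def)
  have Im_close: "norm (of_real u + \<i> * of_real t) \<le> norm z" if "\<bar>t\<bar> \<le> \<bar>v\<bar>" for t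
    using norm_Re_add_imag_le[of t z] that by (simp add: u_def v_def)
  have in_\<Omega>: "a + w \<in> \<Omega>" if "norm w \<le> norm z" for w
    using that z \<delta> by (auto simp: dist_norm)
  obtain \<sigma> where \<sigma>: "\<bar>\<sigma>\<bar> \<le> \<bar>v\<bar>" and expand_Im: "\<phi> ((a + of_real u) + \<i> * of_real v)
      = (\<Sum>m<2. iter_pd (replicate m False) \<phi> (a + of_real u) / fact m * v ^ m)
        + iter_pd (replicate 2 False) \<phi> ((a + of_real u) + \<i> * of_real \<sigma>) / fact 2 * v ^ 2"
    using smooth_on_Maclaurin_Im[OF sm, of v "a + of_real u" "[]" 2] in_\<Omega>[OF Im_close]
    by (auto simp: add.assoc)
  obtain \<tau>1 where \<tau>1: "\<bar>\<tau>1\<bar> \<le> \<bar>u\<bar>" and expand_Re: "\<phi> (a + of_real u)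
      = (\<Sum>m<2. iter_pd (replicate m True) \<phi> a / fact m * u ^ m)
        + iter_pd (replicate 2 True) \<phi> (a + of_real \<tau>1) / fact 2 * u ^ 2"
    using smooth_on_Maclaurin_Re[OF sm, of u a "[]" 2] in_\<Omega>[OF Re_close] by auto
  obtain \<tau>2 where \<tau>2: "\<bar>\<tau>2\<bar> \<le> \<bar>u\<bar>" and expand_Im_Re: "pdy \<phi> (a + of_real u)
      = (\<Sum>m<1. iter_pd (replicate m True @ [False]) \<phi> a / fact m * u ^ m)
        + iter_pd (replicate 1 True @ [False]) \<phi> (a + of_real \<tau>2) / fact 1 * u ^ 1"
    using smooth_on_Maclaurin_Re[OF sm, of u a "[False]" 1] in_\<Omega>[OF Re_close] by auto
  show ?thesis
  proof (rule that[of "a + of_real \<tau>1" "a + of_real \<tau>2" "a + (of_real u + \<i> * of_real \<sigma>)"])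
    show "dist (a + of_real \<tau>1) a \<le> norm z" "dist (a + of_real \<tau>2) a \<le> norm z"
      "dist (a + (of_real u + \<i> * of_real \<sigma>)) a \<le> norm z"
      using Re_close[OF \<tau>1] Re_close[OF \<tau>2] Im_close[OF \<sigma>] by (simp_all add: dist_norm)
    show "\<phi> (a + z) = \<phi> a + pdx \<phi> a * Re z + pdy \<phi> a * Im z + pdx (pdx \<phi>) (a + of_real \<tau>1) / 2 * (Re z)\<^sup>2
       + pdx (pdy \<phi>) (a + of_real \<tau>2) * Re z * Im z
       + pdy (pdy \<phi>) (a + (of_real u + \<i> * of_real \<sigma>)) / 2 * (Im z)\<^sup>2"
      using expand_Im expand_Re expand_Im_Re unfolding z_eq
      by (simp add: u_def v_def numeral_2_eq_2 add.assoc algebra_simps)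
  qed
qed

lemma quadratic_form_perturbation_le:
  fixes u v e1 e2 e3 \<epsilon> A B D :: real
  assumes "\<bar>e1\<bar> \<le> \<epsilon>" "\<bar>e2\<bar> \<le> \<epsilon>" "\<bar>e3\<bar> \<le> \<epsilon>"
  shows "(A + e1) / 2 * u\<^sup>2 + (B + e2) * u * v + (D + e3) / 2 * v\<^sup>2
       \<le> A / 2 * u\<^sup>2 + B * u * v + D / 2 * v\<^sup>2 + \<epsilon> * (u\<^sup>2 + v\<^sup>2)"
proof -
  have uv: "\<bar>u * v\<bar> \<le> (u\<^sup>2 + v\<^sup>2) / 2"
    using sum_squares_bound[of u v] sum_squares_bound[of u "- v"] by (simp add: abs_if)
  have "e2 * (u * v) \<le> \<bar>e2\<bar> * \<bar>u * v\<bar>"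
    by (metis abs_ge_self abs_mult)
  also have "\<dots> \<le> \<epsilon> * ((u\<^sup>2 + v\<^sup>2) / 2)"
    using assms(2) uv by (intro mult_mono) auto
  finally have "e2 * (u * v) \<le> \<epsilon> * ((u\<^sup>2 + v\<^sup>2) / 2)" .
  moreover have "e1 * u\<^sup>2 \<le> \<epsilon> * u\<^sup>2" "e3 * v\<^sup>2 \<le> \<epsilon> * v\<^sup>2"
    using assms(1,3) by (auto intro!: mult_right_mono)
  ultimately show ?thesis
    by (simp add: field_simps)
qed

lemma real_quadratic_eq_Re_holomorphic:
  fixes z :: complex
  shows "px * Re z + py * Im z + A / 2 * (Re z)\<^sup>2 + B * Re z * Im z + D / 2 * (Im z)\<^sup>2
     = Re (Complex px (- py) * z + Complex ((A - D) / 4) (- B / 2) * z\<^sup>2) + (A + D) / 4 * (norm z)\<^sup>2"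
  by (simp only: cmod_power2) (simp add: power2_eq_square field_simps)

lemma smooth_on_quadratic_upper_bound:
  assumes "open \<Omega>" and sm: "smooth_on \<Omega> \<phi>" and a: "a \<in> \<Omega>" and \<epsilon>: "0 < \<epsilon>"
  obtains \<delta> \<beta> \<alpha> where "0 < \<delta>" "ball a \<delta> \<subseteq> \<Omega>"
    "\<And>z. norm z < \<delta> \<Longrightarrow> \<phi> (a + z) \<le> \<phi> a + Re (\<beta> * z + \<alpha> * z\<^sup>2) + (dzdzbar \<phi> a + \<epsilon>) * (norm z)\<^sup>2"
proof -
  have "\<exists>d>0. \<forall>p\<in>\<Omega>. dist p a < d \<longrightarrow> \<bar>iter_pd w \<phi> p - iter_pd w \<phi> a\<bar> < \<epsilon>" for w
    using sm a \<epsilon> unfolding smooth_on_def continuous_on_iff dist_real_def by blast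
  then obtain d where d: "\<And>w. 0 < d w"
    and close: "\<And>w p. p \<in> \<Omega> \<Longrightarrow> dist p a < d w \<Longrightarrow> \<bar>iter_pd w \<phi> p - iter_pd w \<phi> a\<bar> < \<epsilon>"
    by metis
  obtain d0 where d0: "0 < d0" "ball a d0 \<subseteq> \<Omega>"
    using \<open>open \<Omega>\<close> a open_contains_ball by blast
  define \<delta> where "\<delta> = min d0 (min (d [True, True]) (min (d [True, False]) (d [False, False])))"
  have \<delta>: "0 < \<delta>" "ball a \<delta> \<subseteq> \<Omega>"
    using d d0 by (auto simp: \<delta>_def)
  show ?thesis
  proof (rule that[OF \<delta>])
    fix z :: complex
    assume z: "norm z < \<delta>"
    obtain p1 p2 p3 where p: "dist p1 a \<le> norm z" "dist p2 a \<le> norm z" "dist p3 a \<le> norm z"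
      and expand: "\<phi> (a + z) = \<phi> a + pdx \<phi> a * Re z + pdy \<phi> a * Im z + pdx (pdx \<phi>) p1 / 2 * (Re z)\<^sup>2
       + pdx (pdy \<phi>) p2 * Re z * Im z + pdy (pdy \<phi>) p3 / 2 * (Im z)\<^sup>2"
      using smooth_on_second_order_expansion[OF sm \<delta>(2) z] by blast
    have "p1 \<in> \<Omega>" "p2 \<in> \<Omega>" "p3 \<in> \<Omega>"
      using p z \<delta>(2) by (auto simp: dist_commute)
    then have "\<bar>pdx (pdx \<phi>) p1 - pdx (pdx \<phi>) a\<bar> \<le> \<epsilon>" "\<bar>pdx (pdy \<phi>) p2 - pdx (pdy \<phi>) a\<bar> \<le> \<epsilon>"
      "\<bar>pdy (pdy \<phi>) p3 - pdy (pdy \<phi>) a\<bar> \<le> \<epsilon>"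
      using close[of p1 "[True, True]"] close[of p2 "[True, False]"] close[of p3 "[False, False]"] p z
      by (auto simp: \<delta>_def)
    from quadratic_form_perturbation_le[OF this, of "pdx (pdx \<phi>) a" "Re z" "pdx (pdy \<phi>) a" "Im z" "pdy (pdy \<phi>) a"]
    have "\<phi> (a + z) \<le> \<phi> a + (pdx \<phi> a * Re z + pdy \<phi> a * Im z + pdx (pdx \<phi>) a / 2 * (Re z)\<^sup>2
       + pdx (pdy \<phi>) a * Re z * Im z + pdy (pdy \<phi>) a / 2 * (Im z)\<^sup>2) + \<epsilon> * (norm z)\<^sup>2"
      unfolding expand by (simp add: cmod_power2)
    then show "\<phi> (a + z) \<le> \<phi> a + Re (Complex (pdx \<phi> a) (- pdy \<phi> a) * z
        + Complex ((pdx (pdx \<phi>) a - pdy (pdy \<phi>) a) / 4) (- pdx (pdy \<phi>) a / 2) * z\<^sup>2)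
        + (dzdzbar \<phi> a + \<epsilon>) * (norm z)\<^sup>2"
      unfolding real_quadratic_eq_Re_holomorphic dzdzbar_def by (simp add: algebra_simps)
  qed
qed

section \<open>A lower bound for the \<open>L\<^sup>2\<close>-extension index\<close>

lemma holomorphic_on_shift_mult_exp:
  assumes "f holomorphic_on ball a r" "h holomorphic_on ball 0 r"
  shows "(\<lambda>u. f (a + u) * exp (- (h u / 2))) holomorphic_on ball 0 r"
proof -
  have "(\<lambda>u. f (a + u)) holomorphic_on ball 0 r"
  proof (rule holomorphic_on_compose_gen[of "\<lambda>u. a + u" _ f "ball a r", unfolded o_def])
    show "(+) a holomorphic_on ball 0 r"
      by (intro holomorphic_intros)
    show "(+) a ` ball 0 r \<subseteq> ball a r"
      by (auto simp: dist_norm)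
  qed (rule assms(1))
  then show ?thesis
    by (intro holomorphic_intros assms(2)) auto
qed

lemma sq_norm_mult_exp_le_weight:
  assumes "\<phi> (a + u) \<le> \<phi> a + Re (h u) + k * (norm u)\<^sup>2"
  shows "exp (- \<phi> a) * ((cmod (f (a + u) * exp (- (h u / 2))))\<^sup>2 * exp (- k * (norm u)\<^sup>2))
       \<le> (cmod (f (a + u)))\<^sup>2 * exp (- \<phi> (a + u))"
proof -
  have "(cmod (exp (- (h u / 2))))\<^sup>2 = exp (- Re (h u))"
    by (simp add: norm_exp_eq_Re power2_eq_square exp_add[symmetric])
  moreover have "exp (- \<phi> a) * exp (- Re (h u)) * exp (- k * (norm u)\<^sup>2) \<le> exp (- \<phi> (a + u))"
    using assms by (simp flip: exp_add)
  then have "(cmod (f (a + u)))\<^sup>2 * (exp (- \<phi> a) * exp (- Re (h u)) * exp (- k * (norm u)\<^sup>2))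
      \<le> (cmod (f (a + u)))\<^sup>2 * exp (- \<phi> (a + u))"
    by (rule mult_left_mono) simp
  ultimately show ?thesis
    by (simp add: norm_mult power_mult_distrib mult_ac)
qed

lemma weighted_sq_integral_ge_inner_disc:
  fixes f h :: "complex \<Rightarrow> complex" and \<phi> :: "complex \<Rightarrow> real"
  assumes holh: "h holomorphic_on ball 0 r" and h0: "h 0 = 0"
    and bound: "\<And>u. norm u < r \<Longrightarrow> \<phi> (a + u) \<le> \<phi> a + Re (h u) + k * (norm u)\<^sup>2"
    and holf: "f holomorphic_on ball a r" and fa: "f a = 1"
    and intf: "integrable lborel (\<lambda>z. indicator (ball a r) z *\<^sub>R ((cmod (f z))\<^sup>2 * exp (- \<phi> z)))"
    and \<rho>: "0 < \<rho>" "\<rho> < r"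
  shows "exp (- \<phi> a) * (pi * \<rho>\<^sup>2 - k * pi * \<rho> ^ 4 / 2)
       \<le> (LINT z|lborel. indicator (ball a r) z *\<^sub>R ((cmod (f z))\<^sup>2 * exp (- \<phi> z)))"
proof -
  define F where "F u = f (a + u) * exp (- (h u / 2))" for u
  have holF: "F holomorphic_on ball 0 r"
    unfolding F_def using holf holh by (rule holomorphic_on_shift_mult_exp)
  have "continuous_on (cball 0 \<rho>) F"
    by (rule continuous_on_subset[OF holomorphic_on_imp_continuous_on[OF holF]]) (use \<rho> in auto)
  then have contF: "continuous_on (cball a \<rho>) (\<lambda>z. F (z - a))"
    by (rule continuous_on_compose2) (auto intro!: continuous_intros simp: dist_norm norm_minus_commute)
  define low where
    "low z = indicator (ball a \<rho>) z * (exp (- \<phi> a) * ((cmod (F (z - a)))\<^sup>2 * exp (- k * (norm (z - a))\<^sup>2)))"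
    for z
  have int_low: "integrable lborel low"
    using integrable_indicator_ball_continuous[of a \<rho>
        "\<lambda>z. exp (- \<phi> a) * ((cmod (F (z - a)))\<^sup>2 * exp (- k * (norm (z - a))\<^sup>2))"]
    unfolding low_def[abs_def] by (simp add: contF continuous_intros)
  have "exp (- \<phi> a) * (pi * \<rho>\<^sup>2 - k * pi * \<rho> ^ 4 / 2)
      \<le> exp (- \<phi> a) * (LINT u|lborel. indicator (ball 0 \<rho>) u * ((cmod (F u))\<^sup>2 * exp (- k * (norm u)\<^sup>2)))"
    using integral_ball_exp_neg_norm_sq_ge[of \<rho> k] \<rho>
      integral_sq_norm_radial_ge[OF holF _ \<rho>, of "\<lambda>t. exp (- k * t\<^sup>2)"]
    by (simp add: F_def h0 fa continuous_intros)
  also have "\<dots> = (LINT u|lborel. low (a + u))"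
  proof -
    have "low (a + u)
        = exp (- \<phi> a) * (indicator (ball 0 \<rho>) u * ((cmod (F u))\<^sup>2 * exp (- k * (norm u)\<^sup>2)))" for u
      by (simp add: low_def indicator_def dist_norm)
    then show ?thesis
      by simp
  qed
  also have "\<dots> = (LINT z|lborel. low z)"
    using lborel_integral_affine[of 1 low a] borel_measurable_integrable[OF int_low] by simp
  also have "\<dots> \<le> (LINT z|lborel. indicator (ball a r) z *\<^sub>R ((cmod (f z))\<^sup>2 * exp (- \<phi> z)))"
  proof (rule integral_mono[OF int_low intf])
    show "low z \<le> indicator (ball a r) z *\<^sub>R ((cmod (f z))\<^sup>2 * exp (- \<phi> z))" for z
    proof (cases "z \<in> ball a \<rho>")
      case True
      then have z: "norm (z - a) < r" "z \<in> ball a r"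
        using \<rho> by (auto simp: dist_norm norm_minus_commute)
      have "exp (- \<phi> a) * ((cmod (F (z - a)))\<^sup>2 * exp (- k * (norm (z - a))\<^sup>2))
          \<le> (cmod (f z))\<^sup>2 * exp (- \<phi> z)"
        using sq_norm_mult_exp_le_weight[where \<phi> = \<phi> and a = a and u = "z - a" and h = h and k = k,
            OF bound[OF z(1)], of f]
        by (simp add: F_def)
      with True z(2) show ?thesis
        by (simp add: low_def)
    qed (simp add: low_def)
  qed
  finally show ?thesis .
qed

lemma weighted_sq_integral_ge:
  fixes f h :: "complex \<Rightarrow> complex" and \<phi> :: "complex \<Rightarrow> real"
  assumes "h holomorphic_on ball 0 r" "h 0 = 0"
    and "\<And>u. norm u < r \<Longrightarrow> \<phi> (a + u) \<le> \<phi> a + Re (h u) + k * (norm u)\<^sup>2"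
    and "f holomorphic_on ball a r" "f a = 1"
    and "integrable lborel (\<lambda>z. indicator (ball a r) z *\<^sub>R ((cmod (f z))\<^sup>2 * exp (- \<phi> z)))"
    and "0 < r"
  shows "exp (- \<phi> a) * (pi * r\<^sup>2 - k * pi * r ^ 4 / 2)
       \<le> (LINT z|lborel. indicator (ball a r) z *\<^sub>R ((cmod (f z))\<^sup>2 * exp (- \<phi> z)))"
proof (rule tendsto_le[OF trivial_limit_at_left_real tendsto_const])
  show "((\<lambda>\<rho>. exp (- \<phi> a) * (pi * \<rho>\<^sup>2 - k * pi * \<rho> ^ 4 / 2))
      \<longlongrightarrow> exp (- \<phi> a) * (pi * r\<^sup>2 - k * pi * r ^ 4 / 2)) (at_left r)"
    by (intro tendsto_intros) auto
  have "\<forall>\<^sub>F \<rho> in at_left r. \<rho> \<in> {0<..<r}"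
    using \<open>0 < r\<close> by (rule eventually_at_left_real)
  then show "\<forall>\<^sub>F \<rho> in at_left r. exp (- \<phi> a) * (pi * \<rho>\<^sup>2 - k * pi * \<rho> ^ 4 / 2)
      \<le> (LINT z|lborel. indicator (ball a r) z *\<^sub>R ((cmod (f z))\<^sup>2 * exp (- \<phi> z)))"
    by (rule eventually_mono) (use weighted_sq_integral_ge_inner_disc[OF assms(1-6)] in auto)
qed

lemma L2_ext_index_ge:
  fixes h :: "complex \<Rightarrow> complex" and \<phi> :: "complex \<Rightarrow> real"
  assumes cont: "continuous_on (cball a r) \<phi>" and r: "0 < r"
    and holh: "h holomorphic_on ball 0 r" and h0: "h 0 = 0"
    and bound: "\<And>u. norm u < r \<Longrightarrow> \<phi> (a + u) \<le> \<phi> a + Re (h u) + k * (norm u)\<^sup>2"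
  shows "1 - k * r\<^sup>2 / 2 \<le> L2_ext_index \<phi> a r"
  unfolding L2_ext_index_def
proof (rule cInf_greatest)
  have "integrable lborel (\<lambda>z. indicator (ball a r) z *\<^sub>R ((cmod (1::complex))\<^sup>2 * exp (- \<phi> z)))"
    by (intro integrable_indicator_ball_continuous continuous_intros cont)
  then show "{(LINT z:ball a r|lborel. (cmod (f z))\<^sup>2 * exp (- \<phi> z)) / (pi * r\<^sup>2 * exp (- \<phi> a)) | f.
        f holomorphic_on ball a r \<and> f a = 1 \<and>
        set_integrable lborel (ball a r) (\<lambda>z. (cmod (f z))\<^sup>2 * exp (- \<phi> z))} \<noteq> {}"
    unfolding set_integrable_def by (auto intro!: exI[of _ "\<lambda>_. 1"])
next
  fix x
  assume "x \<in> {(LINT z:ball a r|lborel. (cmod (f z))\<^sup>2 * exp (- \<phi> z)) / (pi * r\<^sup>2 * exp (- \<phi> a)) | f.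
        f holomorphic_on ball a r \<and> f a = 1 \<and>
        set_integrable lborel (ball a r) (\<lambda>z. (cmod (f z))\<^sup>2 * exp (- \<phi> z))}"
  then obtain f where x: "x = (LINT z|lborel. indicator (ball a r) z *\<^sub>R ((cmod (f z))\<^sup>2 * exp (- \<phi> z)))
      / (pi * r\<^sup>2 * exp (- \<phi> a))"
    and f: "f holomorphic_on ball a r" "f a = 1"
      "integrable lborel (\<lambda>z. indicator (ball a r) z *\<^sub>R ((cmod (f z))\<^sup>2 * exp (- \<phi> z)))"
    unfolding set_integrable_def set_lebesgue_integral_def by blast
  have "1 - k * r\<^sup>2 / 2 = exp (- \<phi> a) * (pi * r\<^sup>2 - k * pi * r ^ 4 / 2) / (pi * r\<^sup>2 * exp (- \<phi> a))"
    using r by (simp add: field_simps power2_eq_square power4_eq_xxxx)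
  also have "\<dots> \<le> x"
    unfolding x using weighted_sq_integral_ge[OF holh h0 bound f r] r
    by (intro divide_right_mono) auto
  finally show "1 - k * r\<^sup>2 / 2 \<le> x" .
qed

section \<open>Comparison with the upper bound\<close>

lemma exp_neg_le_quadratic:
  fixes y :: real
  assumes "0 \<le> y"
  shows "exp (- y) \<le> 1 - y + y\<^sup>2"
proof -
  have "exp (- y) \<le> 1 / (1 + y)"
    using exp_ge_add_one_self[of y] assms by (simp add: exp_minus inverse_eq_divide frac_le)
  also have "\<dots> \<le> 1 - y + y\<^sup>2"
  proof -
    have "1 \<le> (1 - y + y\<^sup>2) * (1 + y)"
      using assms by (simp add: algebra_simps power2_eq_square power3_eq_cube)
    then show ?thesis
      using assms by (simp add: field_simps)
  qed
  finally show ?thesis .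
qed

lemma le_of_eventually_le_exp_neg:
  fixes k m :: real
  assumes "0 \<le> m" and "\<forall>\<^sub>F r in at_right 0. 1 - k * r\<^sup>2 / 2 \<le> exp (- m * r\<^sup>2)"
  shows "2 * m \<le> k"
proof -
  have "\<forall>\<^sub>F r in at_right 0. m - k / 2 \<le> m\<^sup>2 * r\<^sup>2"
    using assms(2) eventually_at_right_less[of 0]
  proof eventually_elim
    case (elim r)
    have "1 - k * r\<^sup>2 / 2 \<le> 1 - m * r\<^sup>2 + (m * r\<^sup>2)\<^sup>2"
      using elim exp_neg_le_quadratic[of "m * r\<^sup>2"] \<open>0 \<le> m\<close> by simp
    then have "(m - k / 2) * r\<^sup>2 \<le> (m\<^sup>2 * r\<^sup>2) * r\<^sup>2"
      by (simp add: algebra_simps power2_eq_square)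
    then show ?case
      using elim by simp
  qed
  moreover have "((\<lambda>r. m\<^sup>2 * r\<^sup>2) \<longlongrightarrow> 0) (at_right 0)"
    by (intro tendsto_eq_intros) auto
  ultimately have "m - k / 2 \<le> 0"
    by (intro tendsto_le[OF trivial_limit_at_right_real _ tendsto_const])
  then show ?thesis
    by simp
qed

lemma lower_semicontinuous_on_eventually_less:
  assumes "lower_semicontinuous_on {a..b} g" "a < b" "c < g a"
  shows "\<forall>\<^sub>F r in at_right a. c < g r"
proof -
  have "\<forall>\<^sub>F r in at a within {a..b}. c < g r"
    using assms unfolding lower_semicontinuous_on_def by auto
  then show ?thesis
    by (simp add: at_within_Icc_at_right assms(2))
qed

lemma dzdzbar_ge_of_L2_ext_index_le_exp:
  assumes "open \<Omega>" "smooth_on \<Omega> \<phi>" "a \<in> \<Omega>" "0 \<le> m"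
    and L_le: "\<forall>\<^sub>F r in at_right 0. L2_ext_index \<phi> a r \<le> exp (- G r * r\<^sup>2)"
    and m_le: "\<forall>\<^sub>F r in at_right 0. m \<le> G r"
  shows "2 * m \<le> dzdzbar \<phi> a"
proof (rule field_le_epsilon)
  fix \<epsilon> :: real
  assume "0 < \<epsilon>"
  obtain \<delta> \<beta> \<alpha> where \<delta>: "0 < \<delta>" "ball a \<delta> \<subseteq> \<Omega>"
    and bound: "\<And>z. norm z < \<delta> \<Longrightarrow>
      \<phi> (a + z) \<le> \<phi> a + Re (\<beta> * z + \<alpha> * z\<^sup>2) + (dzdzbar \<phi> a + \<epsilon>) * (norm z)\<^sup>2"
    by (rule smooth_on_quadratic_upper_bound[OF assms(1-3) \<open>0 < \<epsilon>\<close>]) (rule that)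
  have "\<forall>\<^sub>F r in at_right 0. r \<in> {0<..<\<delta>}"
    using \<delta>(1) by (rule eventually_at_right_real)
  with L_le m_le have "\<forall>\<^sub>F r in at_right 0. 1 - (dzdzbar \<phi> a + \<epsilon>) * r\<^sup>2 / 2 \<le> exp (- m * r\<^sup>2)"
  proof eventually_elim
    case (elim r)
    have "continuous_on (cball a r) \<phi>"
      by (rule continuous_on_subset[OF smooth_on_imp_continuous_on[OF assms(2)]]) (use elim \<delta>(2) in auto)
    then have "1 - (dzdzbar \<phi> a + \<epsilon>) * r\<^sup>2 / 2 \<le> L2_ext_index \<phi> a r"
      by (rule L2_ext_index_ge[where h = "\<lambda>z. \<beta> * z + \<alpha> * z\<^sup>2"])
        (use elim bound in \<open>auto intro!: holomorphic_intros\<close>)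
    also have "\<dots> \<le> exp (- G r * r\<^sup>2)"
      by (rule elim)
    also have "\<dots> \<le> exp (- m * r\<^sup>2)"
      using elim by (simp add: mult_right_mono)
    finally show ?case .
  qed
  with \<open>0 \<le> m\<close> show "2 * m \<le> dzdzbar \<phi> a + \<epsilon>"
    by (rule le_of_eventually_le_exp_neg)
qed

theorem theorem1p3:
  fixes \<Omega> :: "complex set" and \<phi> :: "complex \<Rightarrow> real"
    and \<gamma> :: "complex \<Rightarrow> real" and g :: "complex \<Rightarrow> real \<Rightarrow> real"
  assumes "open \<Omega>" and "connected \<Omega>" and "bounded \<Omega>"
    and "smooth_on \<Omega> \<phi>"
    and "\<And>a. a \<in> \<Omega> \<Longrightarrow> 0 < \<gamma> a \<and> \<gamma> a < delta \<Omega> a"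
    and "\<And>a. a \<in> \<Omega> \<Longrightarrow> lower_semicontinuous_on {0..\<gamma> a} (g a)"
    and "\<And>a r. a \<in> \<Omega> \<Longrightarrow> r \<in> {0..\<gamma> a} \<Longrightarrow> 0 \<le> g a r"
    and "\<And>a r. a \<in> \<Omega> \<Longrightarrow> r \<in> {0<..<\<gamma> a} \<Longrightarrow> L2_ext_index \<phi> a r \<le> exp (- g a r * r\<^sup>2)"
  shows "\<forall>a\<in>\<Omega>. dzdzbar \<phi> a \<ge> 2 * g a 0"
proof
  fix a
  assume a: "a \<in> \<Omega>"
  have \<gamma>: "0 < \<gamma> a"
    using assms(5)[OF a] by blast
  then have small_r: "\<forall>\<^sub>F r in at_right 0. r \<in> {0<..<\<gamma> a}"
    by (rule eventually_at_right_real)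
  have "c \<le> dzdzbar \<phi> a / 2" if "c < g a 0" for c
  proof -
    have "2 * max c 0 \<le> dzdzbar \<phi> a"
    proof (rule dzdzbar_ge_of_L2_ext_index_le_exp[OF assms(1,4) a, where G = "g a"])
      show "\<forall>\<^sub>F r in at_right 0. L2_ext_index \<phi> a r \<le> exp (- g a r * r\<^sup>2)"
        using small_r by eventually_elim (rule assms(8)[OF a])
      show "\<forall>\<^sub>F r in at_right 0. max c 0 \<le> g a r"
        using small_r lower_semicontinuous_on_eventually_less[OF assms(6)[OF a] \<gamma> that]
        by eventually_elim (use assms(7)[OF a] in auto)
    qed simp
    then show ?thesis
      using max.cobounded1[of c 0] by linarith
  qed
  then have "g a 0 \<le> dzdzbar \<phi> a / 2"
    by (rule dense_le)
  then show "2 * g a 0 \<le> dzdzbar \<phi> a"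
    by simp
qed

end
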